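(* Assume $\tau_1\tau_2\|K\|^2\le1/2$ and $\tau_1\le1/(2L)$, and that $x_0\in[0,1]^n$ and $y_0\in\mathbb R_+^{m_1}\times\mathbb R^{m_2}$. Then for every $N\ge1$, \[\frac1{\tau_1}\sum_{k=1}^N\|x_k-x_{k-1}\|^2+\frac1{\tau_2}\sum_{k=1}^N\|y_k-y_{k-1}\|^2\le4\Delta\Phi_N+\frac8{\tau_1}\sum_{k=1}^N\|x_{k-1}\|^2+16\tau_2\|r\|^2N,\] where $\Delta\Phi_N:=\Phi(x_0,y_0)-\Phi(x_N,y_N)$.
   Context: Let $n,m_1,m_2$ be positive integers, $Q\in\mathbb R^{n\times n}$ symmetric, $c\in\mathbb R^n$, $A\in\mathbb R^{m_1\times n}$, $b\in\mathbb R^{m_1}$, $B\in\mathbb R^{m_2\times n}$, $d\in\mathbb R^{m_2}$. Let $K:=-\begin{pmatrix}A\\ B\end{pmatrix}$ and $r:=(b;d)$. Fix $\rho\ge0$ and let $\mathbf 1$ be the all-ones vector. Define $\hat{\mathcal L}(x,y):=\langle x,Qx\rangle+\langle c,x\rangle+\langle y,Kx+r\rangle+\rho\langle x,\mathbf 1-x\rangle$ (no convexity is assumed), with $\nabla_x\hat{\mathcal L}(x,y)=c+\rho\mathbf 1+K^\top y+2Qx-2\rho x$. Let $Y:=\mathbb R_+^{m_1}\times\mathbb R^{m_2}$, $h_1$ the indicator of $[0,1]^n$, $h_2$ the indicator of $Y$ ($0$ on the set, $+\infty$ outside), $\Phi(x,y):=\hat{\mathcal L}(x,y)+h_1(x)-h_2(y)$.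 $L:=2(\|Q\|+\rho)$, $\|\cdot\|$ the spectral norm on matrices and Euclidean norm on vectors. PDHG iterates with step sizes $\tau_1,\tau_2>0$: $x_{-1}:=x_0$, $\bar x_0:=x_0$, and for $k\ge1$: $y_k=\Pi_Y(y_{k-1}+\tau_2(K\bar x_{k-1}+r))$, $x_k=\Pi_{[0,1]^n}(x_{k-1}-\tau_1\nabla_x\hat{\mathcal L}(x_{k-1},y_k))$, $\bar x_k=2x_k-x_{k-1}$, with $\Pi$ the Euclidean projection. *)

theory Defs
  imports "HOL-Analysis.Analysis" "HOL-Library.Extended_Real"
begin

definition Kmat :: "real^'n^'m1 \<Rightarrow> real^'n^'m2 \<Rightarrow> real^'n^('m1 + 'm2)" where
  "Kmat A B = (\<chi> i. case i of Inl j \<Rightarrow> - (A $ j) | Inr j \<Rightarrow> - (B $ j))"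

definition rvec :: "real^'m1 \<Rightarrow> real^'m2 \<Rightarrow> real^('m1 + 'm2)" where
  "rvec b d = (\<chi> i. case i of Inl j \<Rightarrow> b $ j | Inr j \<Rightarrow> d $ j)"

definition Yset :: "(real^('m1::finite + 'm2::finite)) set" where
  "Yset = {y. \<forall>j. 0 \<le> y $ Inl j}"

definition Lhat :: "real^'n^'n \<Rightarrow> real^'n \<Rightarrow> real^'n^'m \<Rightarrow> real^'m \<Rightarrow> real
                    \<Rightarrow> real^'n \<Rightarrow> real^'m \<Rightarrow> real" where
  "Lhat Q c K r \<rho> x y = x \<bullet> (Q *v x) + c \<bullet> x + y \<bullet> (K *v x + r) + \<rho> * (x \<bullet> (vec 1 - x))"

definition gradx :: "real^'n^'n \<Rightarrow> real^'n \<Rightarrow> real^'n^'m \<Rightarrow> real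
                    \<Rightarrow> real^'n \<Rightarrow> real^'m \<Rightarrow> real^'n" where
  "gradx Q c K \<rho> x y = c + \<rho> *\<^sub>R vec 1 + transpose K *v y + 2 *\<^sub>R (Q *v x) - (2 * \<rho>) *\<^sub>R x"

definition ind :: "'a set \<Rightarrow> 'a \<Rightarrow> ereal" where
  "ind S z = (if z \<in> S then 0 else \<infinity>)"

definition Phi :: "real^'n^'n \<Rightarrow> real^'n \<Rightarrow> real^'n^('m1 + 'm2) \<Rightarrow> real^('m1::finite + 'm2::finite) \<Rightarrow> real
                    \<Rightarrow> real^'n \<Rightarrow> real^('m1 + 'm2) \<Rightarrow> ereal" where
  "Phi Q c K r \<rho> x y = ereal (Lhat Q c K r \<rho> x y) + ind (cbox 0 1) x - ind Yset y"

text \<open>PDHG state after k steps: (x_k, xbar_k, y_k).\<close>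
primrec pdhg :: "real^'n^'n \<Rightarrow> real^'n \<Rightarrow> real^'n^('m1 + 'm2) \<Rightarrow> real^('m1::finite + 'm2::finite) \<Rightarrow> real
                  \<Rightarrow> real \<Rightarrow> real \<Rightarrow> real^'n \<Rightarrow> real^('m1 + 'm2) \<Rightarrow> nat
                  \<Rightarrow> (real^'n) \<times> (real^'n) \<times> (real^('m1 + 'm2))" where
  "pdhg Q c K r \<rho> \<tau>1 \<tau>2 x0 y0 0 = (x0, x0, y0)"
| "pdhg Q c K r \<rho> \<tau>1 \<tau>2 x0 y0 (Suc k) =
     (let (x, xb, y) = pdhg Q c K r \<rho> \<tau>1 \<tau>2 x0 y0 k;
          y' = closest_point Yset (y + \<tau>2 *\<^sub>R (K *v xb + r));
          x' = closest_point (cbox 0 1) (x - \<tau>1 *\<^sub>R gradx Q c K \<rho> x y')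
      in (x', 2 *\<^sub>R x' - x, y'))"

end

theory Submission
  imports Defs
begin

text \<open>
  Each PDHG step is compared on the Lagrangian \<open>Lhat\<close>. The projected gradient step in \<open>x\<close>
  decreases \<open>Lhat\<close> by at least \<open>3/4 |x\<^sub>k - x\<^sub>k\<^sub>-\<^sub>1|\<^sup>2 / \<tau>1\<close>: the projection
  inequality gives \<open>-|x\<^sub>k - x\<^sub>k\<^sub>-\<^sub>1|\<^sup>2 / \<tau>1\<close>, the curvature of \<open>Q\<close> costs at most a quarter
  of it because \<open>4 |Q| \<tau>1 \<le> 1\<close>, and the concave penalty \<open>-\<rho>|x|\<^sup>2\<close> only helps. The dual step
  increases \<open>Lhat\<close> by \<open>(y\<^sub>k - y\<^sub>k\<^sub>-\<^sub>1) \<bullet> (K x\<^sub>k\<^sub>-\<^sub>1 + r)\<close>, which Young's inequality splits into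
  squares; nonexpansiveness of the projection onto \<open>Y\<close> bounds \<open>|y\<^sub>k - y\<^sub>k\<^sub>-\<^sub>1|\<close> by
  \<open>\<tau>2 |K xbar\<^sub>k\<^sub>-\<^sub>1 + r|\<close>, and \<open>\<tau>1 \<tau>2 |K|\<^sup>2 \<le> 1/2\<close> turns every \<open>\<tau>2 |K u|\<^sup>2\<close> into
  \<open>|u|\<^sup>2 / (2 \<tau>1)\<close>. Since \<open>xbar\<^sub>k\<^sub>-\<^sub>1 - x\<^sub>k\<^sub>-\<^sub>1 = x\<^sub>k\<^sub>-\<^sub>1 - x\<^sub>k\<^sub>-\<^sub>2\<close>, the resulting one-step
  estimate contains \<open>2 |x\<^sub>k\<^sub>-\<^sub>1 - x\<^sub>k\<^sub>-\<^sub>2|\<^sup>2 / \<tau>1 - 2 |x\<^sub>k - x\<^sub>k\<^sub>-\<^sub>1|\<^sup>2 / \<tau>1\<close>, which telescopes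
  when summed over \<open>k\<close>. On the feasible iterates \<open>Phi\<close> coincides with \<open>Lhat\<close>.
\<close>

lemma power2_norm_add_le:
  fixes a b :: "'a::real_inner"
  shows "(norm (a + b))\<^sup>2 \<le> 2 * (norm a)\<^sup>2 + 2 * (norm b)\<^sup>2"
proof -
  have "(norm (a + b))\<^sup>2 + (norm (a - b))\<^sup>2 = 2 * (norm a)\<^sup>2 + 2 * (norm b)\<^sup>2"
    by (simp add: power2_norm_eq_inner inner_add_left inner_add_right inner_diff_left
        inner_diff_right inner_commute)
  then show ?thesis using zero_le_power2[of "norm (a - b)"] by linarith
qed

lemma power2_norm_add3_le:
  fixes a b c :: "'a::real_inner"
  shows "(norm (a + b + c))\<^sup>2 \<le> 2 * (norm a)\<^sup>2 + 4 * (norm b)\<^sup>2 + 4 * (norm c)\<^sup>2"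
  using power2_norm_add_le[of a "b + c"] power2_norm_add_le[of b c]
  by (simp add: add.assoc)

lemma inner_le_weighted_squares:
  fixes u w :: "'a::real_inner"
  assumes "t > 0"
  shows "inner u w \<le> t * (norm w)\<^sup>2 + (norm u)\<^sup>2 / (4 * t)"
proof -
  have "0 \<le> (norm (u - (2 * t) *\<^sub>R w))\<^sup>2 / (4 * t)" using assms by simp
  also have "\<dots> = (norm u)\<^sup>2 / (4 * t) - inner u w + t * (norm w)\<^sup>2"
    using assms by (simp add: power2_norm_eq_inner inner_diff_left inner_diff_right inner_commute
        field_simps)
  finally show ?thesis by simp
qed

lemma closest_point_gradient_step:
  fixes S :: "'a::{real_inner,heine_borel} set" and t :: real and g :: 'a
  assumes "convex S" "closed S" "x \<in> S"
  defines "x' \<equiv> closest_point S (x - t *\<^sub>R g)"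
  shows "t * inner g (x' - x) + (norm (x' - x))\<^sup>2 \<le> 0"
proof -
  have "inner ((x - t *\<^sub>R g) - x') (x - x') \<le> 0"
    unfolding x'_def using assms(1-3) by (rule closest_point_dot)
  then show ?thesis
    by (simp add: power2_norm_eq_inner inner_diff_left inner_diff_right inner_commute algebra_simps)
qed

lemma norm_closest_point_step_le:
  fixes S :: "'a::{real_inner,heine_borel} set"
  assumes "convex S" "closed S" "y \<in> S"
  shows "norm (closest_point S (y + u) - y) \<le> norm u"
  using closest_point_lipschitz[OF assms(1,2), of "y + u" y] assms
  by (auto simp: closest_point_self dist_norm)

lemma inner_matrix_vector_le_onorm:
  fixes M :: "real^'n^'n"
  shows "inner d (M *v d) \<le> onorm (\<lambda>v. M *v v) * (norm d)\<^sup>2"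
proof -
  have "inner d (M *v d) \<le> norm d * norm (M *v d)" by (rule norm_cauchy_schwarz)
  also have "\<dots> \<le> norm d * (onorm (\<lambda>v. M *v v) * norm d)"
    by (intro mult_left_mono onorm) simp_all
  finally show ?thesis by (simp add: power2_eq_square algebra_simps)
qed

lemma power2_norm_matrix_vector_le:
  fixes M :: "real^'n^'m"
  assumes "\<tau>1 > 0" "\<tau>2 > 0" "\<tau>1 * \<tau>2 * (onorm (\<lambda>v. M *v v))\<^sup>2 \<le> 1/2"
  shows "\<tau>2 * (norm (M *v u))\<^sup>2 \<le> 1/2 * ((norm u)\<^sup>2 / \<tau>1)"
proof -
  have "(norm (M *v u))\<^sup>2 \<le> (onorm (\<lambda>v. M *v v) * norm u)\<^sup>2"
    by (intro power_mono onorm) simp_all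
  then have "\<tau>1 * \<tau>2 * (norm (M *v u))\<^sup>2 \<le> (\<tau>1 * \<tau>2 * (onorm (\<lambda>v. M *v v))\<^sup>2) * (norm u)\<^sup>2"
    using assms(1,2) by (simp add: power_mult_distrib mult_left_mono mult.assoc)
  also have "\<dots> \<le> (norm u)\<^sup>2 / 2"
    using mult_right_mono[OF assms(3) zero_le_power2] by simp
  finally show ?thesis using assms(1) by (simp add: field_simps)
qed

lemma closed_Yset: "closed Yset"
  unfolding Yset_def Collect_all_eq by (simp add: closed_INT closed_halfspace_component_ge_cart)

lemma convex_Yset: "convex Yset"
  unfolding Yset_def convex_def by auto

lemma Lhat_primal_increment:
  fixes Q :: "real^'n^'n" and K :: "real^'n^'m"
  assumes "transpose Q = Q"
  shows "Lhat Q c K r \<rho> (x + d) y - Lhat Q c K r \<rho> x y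
    = inner (gradx Q c K \<rho> x y) d + inner d (Q *v d) - \<rho> * (norm d)\<^sup>2"
proof -
  have Q_sym: "inner d (Q *v x) = inner x (Q *v d)"
    by (metis assms dot_lmul_matrix inner_commute vector_transpose_matrix)
  have K_adj: "inner (transpose K *v y) d = inner y (K *v d)" "inner d (y v* K) = inner y (K *v d)"
    by (simp only: transpose_matrix_vector dot_lmul_matrix) (metis inner_commute dot_lmul_matrix)
  show ?thesis
    unfolding Lhat_def gradx_def
    by (simp add: matrix_vector_right_distrib inner_add_left inner_add_right inner_diff_left
        inner_diff_right Q_sym K_adj algebra_simps inner_commute power2_norm_eq_inner)
qed

lemma Lhat_dual_increment:
  "Lhat Q c K r \<rho> x y' - Lhat Q c K r \<rho> x y = inner (y' - y) (K *v x + r)"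
  unfolding Lhat_def by (simp add: inner_diff_left)

lemma Lhat_primal_descent:
  fixes Q :: "real^'n^'n" and K :: "real^'n^'m"
  assumes "transpose Q = Q" "\<rho> \<ge> 0" "\<tau>1 > 0" "4 * onorm (\<lambda>v. Q *v v) * \<tau>1 \<le> 1"
    and "convex S" "closed S" "x \<in> S"
    and x': "x' = closest_point S (x - \<tau>1 *\<^sub>R gradx Q c K \<rho> x y)"
  shows "Lhat Q c K r \<rho> x' y \<le> Lhat Q c K r \<rho> x y - 3/4 * ((norm (x' - x))\<^sup>2 / \<tau>1)"
proof -
  define d where "d = x' - x"
  have gradient_step: "inner (gradx Q c K \<rho> x y) d \<le> - ((norm d)\<^sup>2 / \<tau>1)"
    using closest_point_gradient_step[OF assms(5-7), of \<tau>1 "gradx Q c K \<rho> x y"] assms(3)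
    unfolding x' d_def by (simp add: field_simps)
  have "inner d (Q *v d) \<le> onorm (\<lambda>v. Q *v v) * (norm d)\<^sup>2"
    by (rule inner_matrix_vector_le_onorm)
  also have "\<dots> \<le> 1/4 * ((norm d)\<^sup>2 / \<tau>1)"
    using mult_right_mono[OF assms(4) zero_le_power2[of "norm d"]] assms(3)
    by (simp add: field_simps)
  finally have curvature: "inner d (Q *v d) \<le> 1/4 * ((norm d)\<^sup>2 / \<tau>1)" .
  have "Lhat Q c K r \<rho> x' y - Lhat Q c K r \<rho> x y
      = inner (gradx Q c K \<rho> x y) d + inner d (Q *v d) - \<rho> * (norm d)\<^sup>2"
    using Lhat_primal_increment[OF assms(1), of c K r \<rho> x d y] by (simp add: d_def)
  moreover have "0 \<le> \<rho> * (norm d)\<^sup>2" using assms(2) by simp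
  ultimately show ?thesis
    using gradient_step curvature unfolding d_def[symmetric] by linarith
qed

lemma Lhat_dual_ascent:
  assumes "\<tau>2 > 0"
  shows "Lhat Q c K r \<rho> x y' \<le> Lhat Q c K r \<rho> x y
    + \<tau>2 * (norm (K *v x + r))\<^sup>2 + 1/4 * ((norm (y' - y))\<^sup>2 / \<tau>2)"
proof -
  have "inner (y' - y) (K *v x + r) \<le> \<tau>2 * (norm (K *v x + r))\<^sup>2 + (norm (y' - y))\<^sup>2 / (4 * \<tau>2)"
    using assms by (rule inner_le_weighted_squares)
  then show ?thesis using Lhat_dual_increment[of Q c K r \<rho> x y' y] by simp
qed

lemma pdhg_step_estimate:
  fixes Q :: "real^'n^'n" and K :: "real^'n^'m" and X :: "(real^'n) set" and Y :: "(real^'m) set"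
  assumes "transpose Q = Q" "\<rho> \<ge> 0" "\<tau>1 > 0" "\<tau>2 > 0"
    and "\<tau>1 * \<tau>2 * (onorm (\<lambda>v. K *v v))\<^sup>2 \<le> 1/2" "4 * onorm (\<lambda>v. Q *v v) * \<tau>1 \<le> 1"
    and "convex X" "closed X" "x \<in> X" "convex Y" "closed Y" "y \<in> Y"
    and y': "y' = closest_point Y (y + \<tau>2 *\<^sub>R (K *v xb + r))"
    and x': "x' = closest_point X (x - \<tau>1 *\<^sub>R gradx Q c K \<rho> x y')"
  shows "(norm (x' - x))\<^sup>2 / \<tau>1 + (norm (y' - y))\<^sup>2 / \<tau>2
    \<le> 4 * (Lhat Q c K r \<rho> x y - Lhat Q c K r \<rho> x' y') + 8 * ((norm x)\<^sup>2 / \<tau>1)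
      + 16 * (\<tau>2 * (norm r)\<^sup>2) + 2 * ((norm (xb - x))\<^sup>2 / \<tau>1) - 2 * ((norm (x' - x))\<^sup>2 / \<tau>1)"
proof -
  note K_bound = power2_norm_matrix_vector_le[OF assms(3-5)]
  have descent: "Lhat Q c K r \<rho> x' y' \<le> Lhat Q c K r \<rho> x y' - 3/4 * ((norm (x' - x))\<^sup>2 / \<tau>1)"
    using assms(1-3,6-9) x' by (rule Lhat_primal_descent)
  have ascent: "Lhat Q c K r \<rho> x y' \<le> Lhat Q c K r \<rho> x y
      + \<tau>2 * (norm (K *v x + r))\<^sup>2 + 1/4 * ((norm (y' - y))\<^sup>2 / \<tau>2)"
    using assms(4) by (rule Lhat_dual_ascent)
  have "\<tau>2 * (norm (K *v x + r))\<^sup>2 \<le> \<tau>2 * (2 * (norm (K *v x))\<^sup>2 + 2 * (norm r)\<^sup>2)"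
    using assms(4) by (intro mult_left_mono power2_norm_add_le) simp
  then have coupling: "\<tau>2 * (norm (K *v x + r))\<^sup>2 \<le> (norm x)\<^sup>2 / \<tau>1 + 2 * (\<tau>2 * (norm r)\<^sup>2)"
    using K_bound[of x] by (simp add: algebra_simps)
  have "norm (y' - y) \<le> norm (\<tau>2 *\<^sub>R (K *v xb + r))"
    unfolding y' using assms(10-12) by (rule norm_closest_point_step_le)
  then have "(norm (y' - y))\<^sup>2 \<le> (\<tau>2 * norm (K *v xb + r))\<^sup>2"
    using assms(4) by (intro power_mono) simp_all
  moreover have "K *v xb + r = K *v (xb - x) + K *v x + r"
    by (simp flip: matrix_vector_right_distrib)
  ultimately have "(norm (y' - y))\<^sup>2 / \<tau>2 \<le> \<tau>2 * (norm (K *v (xb - x) + K *v x + r))\<^sup>2"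
    using assms(4) by (simp add: field_simps power2_eq_square)
  also have "\<dots> \<le> \<tau>2 * (2 * (norm (K *v (xb - x)))\<^sup>2 + 4 * (norm (K *v x))\<^sup>2 + 4 * (norm r)\<^sup>2)"
    using assms(4) by (intro mult_left_mono power2_norm_add3_le) simp
  finally have dual_move: "(norm (y' - y))\<^sup>2 / \<tau>2
      \<le> (norm (xb - x))\<^sup>2 / \<tau>1 + 2 * ((norm x)\<^sup>2 / \<tau>1) + 4 * (\<tau>2 * (norm r)\<^sup>2)"
    using K_bound[of x] K_bound[of "xb - x"] by (simp add: algebra_simps)
  show ?thesis using descent ascent coupling dual_move by argo
qed

lemma sum_le_telescoping:
  fixes u c F b :: "nat \<Rightarrow> real"
  assumes "\<And>j. j < N \<Longrightarrow> u j \<le> F j - F (Suc j) + c j + b j - b (Suc j)"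
    and "b 0 = 0" "b N \<ge> 0"
  shows "(\<Sum>j<N. u j) \<le> F 0 - F N + (\<Sum>j<N. c j)"
proof -
  have "(\<Sum>j<N. u j) \<le> (\<Sum>j<N. (F j - F (Suc j)) + c j + (b j - b (Suc j)))"
    using assms(1) by (intro sum_mono) (simp add: algebra_simps)
  also have "\<dots> = F 0 - F N + (\<Sum>j<N. c j) + (b 0 - b N)"
    by (simp add: sum.distrib sum_lessThan_telescope')
  finally show ?thesis using assms(2,3) by simp
qed

lemma Phi_eq_Lhat:
  assumes "x \<in> cbox 0 1" "y \<in> Yset"
  shows "Phi Q c K r \<rho> x y = ereal (Lhat Q c K r \<rho> x y)"
  unfolding Phi_def ind_def using assms by simp

locale pdhg_run =
  fixes Q :: "real^'n^'n" and c :: "real^'n" and K :: "real^'n^('m1::finite + 'm2::finite)"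
    and r :: "real^('m1 + 'm2)" and \<rho> \<tau>1 \<tau>2 :: real and x0 :: "real^'n" and y0 :: "real^('m1 + 'm2)"
  assumes symmetric_Q: "transpose Q = Q" and nonneg_\<rho>: "\<rho> \<ge> 0"
    and pos_\<tau>1: "\<tau>1 > 0" and pos_\<tau>2: "\<tau>2 > 0"
    and step_sizes_K: "\<tau>1 * \<tau>2 * (onorm (\<lambda>v. K *v v))\<^sup>2 \<le> 1/2"
    and step_size_Q: "4 * onorm (\<lambda>v. Q *v v) * \<tau>1 \<le> 1"
    and x0_in_box: "x0 \<in> cbox 0 1" and y0_in_Yset: "y0 \<in> Yset"
begin

definition primal :: "nat \<Rightarrow> real^'n" where
  "primal k = fst (pdhg Q c K r \<rho> \<tau>1 \<tau>2 x0 y0 k)"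

definition extrapolated :: "nat \<Rightarrow> real^'n" where
  "extrapolated k = fst (snd (pdhg Q c K r \<rho> \<tau>1 \<tau>2 x0 y0 k))"

definition dual :: "nat \<Rightarrow> real^('m1 + 'm2)" where
  "dual k = snd (snd (pdhg Q c K r \<rho> \<tau>1 \<tau>2 x0 y0 k))"

lemma dual_Suc: "dual (Suc k) = closest_point Yset (dual k + \<tau>2 *\<^sub>R (K *v extrapolated k + r))"
  unfolding primal_def extrapolated_def dual_def
  by (cases "pdhg Q c K r \<rho> \<tau>1 \<tau>2 x0 y0 k") (simp add: Let_def)

lemma primal_Suc:
  "primal (Suc k) = closest_point (cbox 0 1) (primal k - \<tau>1 *\<^sub>R gradx Q c K \<rho> (primal k) (dual (Suc k)))"
  unfolding primal_def dual_def
  by (cases "pdhg Q c K r \<rho> \<tau>1 \<tau>2 x0 y0 k") (simp add: Let_def)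

text \<open>Thanks to truncated subtraction this also covers \<open>k = 0\<close>, where \<open>x\<^sub>-\<^sub>1 = x\<^sub>0\<close>.\<close>
lemma extrapolated_eq: "extrapolated k = primal k + (primal k - primal (k - 1))"
proof (cases k)
  case 0
  then show ?thesis by (simp add: primal_def extrapolated_def)
next
  case (Suc j)
  then show ?thesis
    unfolding primal_def extrapolated_def
    by (cases "pdhg Q c K r \<rho> \<tau>1 \<tau>2 x0 y0 j") (simp add: Let_def scaleR_2 algebra_simps)
qed

lemma primal_in_box: "primal k \<in> cbox 0 1"
proof (cases k)
  case 0
  then show ?thesis using x0_in_box by (simp add: primal_def)
next
  case (Suc j)
  show ?thesis unfolding Suc primal_Suc
    by (metis closest_point_in_set closed_cbox empty_iff x0_in_box)
qed

lemma dual_in_Yset: "dual k \<in> Yset"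
proof (cases k)
  case 0
  then show ?thesis using y0_in_Yset by (simp add: dual_def)
next
  case (Suc j)
  show ?thesis unfolding Suc dual_Suc
    by (metis closest_point_in_set closed_Yset empty_iff y0_in_Yset)
qed

lemma step_estimate:
  "(norm (primal (Suc k) - primal k))\<^sup>2 / \<tau>1 + (norm (dual (Suc k) - dual k))\<^sup>2 / \<tau>2
    \<le> 4 * (Lhat Q c K r \<rho> (primal k) (dual k) - Lhat Q c K r \<rho> (primal (Suc k)) (dual (Suc k)))
      + 8 * ((norm (primal k))\<^sup>2 / \<tau>1) + 16 * (\<tau>2 * (norm r)\<^sup>2)
      + 2 * ((norm (primal k - primal (k - 1)))\<^sup>2 / \<tau>1)
      - 2 * ((norm (primal (Suc k) - primal k))\<^sup>2 / \<tau>1)"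
  using pdhg_step_estimate[OF symmetric_Q nonneg_\<rho> pos_\<tau>1 pos_\<tau>2 step_sizes_K step_size_Q
      convex_box(1) closed_cbox primal_in_box convex_Yset closed_Yset dual_in_Yset dual_Suc primal_Suc]
  by (simp add: extrapolated_eq)

lemma cumulative_estimate:
  "1/\<tau>1 * (\<Sum>k=1..N. (norm (primal k - primal (k-1)))\<^sup>2)
     + 1/\<tau>2 * (\<Sum>k=1..N. (norm (dual k - dual (k-1)))\<^sup>2)
   \<le> 4 * (Lhat Q c K r \<rho> x0 y0 - Lhat Q c K r \<rho> (primal N) (dual N))
     + (8/\<tau>1 * (\<Sum>k=1..N. (norm (primal (k-1)))\<^sup>2) + 16 * \<tau>2 * (norm r)\<^sup>2 * real N)"
proof -
  define F where "F k = 4 * Lhat Q c K r \<rho> (primal k) (dual k)" for k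
  define b where "b k = 2 * ((norm (primal k - primal (k - 1)))\<^sup>2 / \<tau>1)" for k
  have "(\<Sum>j<N. (norm (primal (Suc j) - primal j))\<^sup>2 / \<tau>1 + (norm (dual (Suc j) - dual j))\<^sup>2 / \<tau>2)
      \<le> F 0 - F N + (\<Sum>j<N. 8 * ((norm (primal j))\<^sup>2 / \<tau>1) + 16 * (\<tau>2 * (norm r)\<^sup>2))"
  proof (rule sum_le_telescoping)
    show "b 0 = 0" "b N \<ge> 0" using pos_\<tau>1 by (simp_all add: b_def)
  qed (use step_estimate in \<open>simp add: F_def b_def algebra_simps\<close>)
  moreover have "primal 0 = x0" "dual 0 = y0" by (simp_all add: primal_def dual_def)
  ultimately show ?thesis
    by (simp add: F_def sum.atLeast1_atMost_eq sum.distrib sum_distrib_left sum_divide_distrib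
        algebra_simps)
qed

end

theorem mainTheorem3:
  fixes Q :: "real^'n^'n" and c :: "real^'n"
    and A :: "real^'n^'m1" and b :: "real^'m1"
    and B :: "real^'n^'m2" and d :: "real^'m2"
    and \<rho> \<tau>1 \<tau>2 :: real and x0 :: "real^'n" and y0 :: "real^('m1 + 'm2)" and N :: nat
  defines "K \<equiv> Kmat A B"
    and "r \<equiv> rvec b d"
    and "L \<equiv> 2 * (onorm (\<lambda>v. Q *v v) + \<rho>)"
    and "xs \<equiv> (\<lambda>k. fst (pdhg Q c (Kmat A B) (rvec b d) \<rho> \<tau>1 \<tau>2 x0 y0 k))"
    and "ys \<equiv> (\<lambda>k. snd (snd (pdhg Q c (Kmat A B) (rvec b d) \<rho> \<tau>1 \<tau>2 x0 y0 k)))"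
  assumes "transpose Q = Q"
    and "\<rho> \<ge> 0" and "\<tau>1 > 0" and "\<tau>2 > 0"
    and "\<tau>1 * \<tau>2 * (onorm (\<lambda>v. K *v v))\<^sup>2 \<le> 1/2"
    and "2 * L * \<tau>1 \<le> 1"
    and "x0 \<in> cbox 0 1" and "y0 \<in> Yset"
    and "N \<ge> 1"
  shows "ereal (1/\<tau>1 * (\<Sum>k=1..N. (norm (xs k - xs (k-1)))\<^sup>2)
              + 1/\<tau>2 * (\<Sum>k=1..N. (norm (ys k - ys (k-1)))\<^sup>2))
         \<le> 4 * (Phi Q c K r \<rho> x0 y0 - Phi Q c K r \<rho> (xs N) (ys N))
            + ereal (8/\<tau>1 * (\<Sum>k=1..N. (norm (xs (k-1)))\<^sup>2) + 16 * \<tau>2 * (norm r)\<^sup>2 * real N)"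
proof -
  have "4 * onorm (\<lambda>v. Q *v v) * \<tau>1 \<le> 2 * L * \<tau>1"
    unfolding L_def using assms(7,8) by (intro mult_right_mono) auto
  with assms(11) have "4 * onorm (\<lambda>v. Q *v v) * \<tau>1 \<le> 1" by linarith
  with assms(6-13) interpret pdhg_run Q c K r \<rho> \<tau>1 \<tau>2 x0 y0
    by unfold_locales
  have "xs = primal" "ys = dual"
    by (simp_all add: fun_eq_iff xs_def ys_def primal_def dual_def flip: K_def r_def)
  moreover have "Phi Q c K r \<rho> x0 y0 = ereal (Lhat Q c K r \<rho> x0 y0)"
    using assms(12,13) by (rule Phi_eq_Lhat)
  moreover have "Phi Q c K r \<rho> (primal N) (dual N) = ereal (Lhat Q c K r \<rho> (primal N) (dual N))"
    using primal_in_box dual_in_Yset by (rule Phi_eq_Lhat)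
  ultimately show ?thesis using cumulative_estimate[of N] by simp
qed

end
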